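(* Let $k$ be a non-negative integer, $a_0,\dots,a_k\in\mathbb{C}$, and $\Lambda=\sum_{i=0}^{k}a_i(Dx)^iD$ acting on $\mathcal{P}$. (i) For any positive integer $k$, $\Lambda=0$ if and only if $a_i=0$ for $i=0,\dots,k$. (ii) Suppose $a_k\neq0$. Then $\Lambda$ is a lowering operator if and only if the polynomial $f(x)=\sum_{i=0}^{k}a_ix^i$ has no positive integer root.
   Context: $\mathcal{P}$ is the space of complex polynomials in $x$; $D$ is the derivative, $x$ is multiplication by $x$, and products of operators are compositions. A lowering operator is a linear map $\mathcal{O}:\mathcal{P}\to\mathcal{P}$ with $\mathcal{O}(1)=0$ and $\deg(\mathcal{O}(x^n))=n-1$ for all $n\ge1$. *)

theory Defs
  imports "HOL-Computational_Algebra.Polynomial"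
begin

definition Dop :: "complex poly \<Rightarrow> complex poly" where
  "Dop p = pderiv p"

definition Xop :: "complex poly \<Rightarrow> complex poly" where
  "Xop p = [:0, 1:] * p"

definition Lam :: "nat \<Rightarrow> (nat \<Rightarrow> complex) \<Rightarrow> complex poly \<Rightarrow> complex poly" where
  "Lam k a p = (\<Sum>i\<le>k. smult (a i) (((Dop \<circ> Xop) ^^ i) (Dop p)))"

definition lowering_op :: "(complex poly \<Rightarrow> complex poly) \<Rightarrow> bool" where
  "lowering_op T \<longleftrightarrow>
     (\<forall>p q. T (p + q) = T p + T q) \<and>
     (\<forall>c p. T (smult c p) = smult c (T p)) \<and>
     T 1 = 0 \<and>
     (\<forall>n\<ge>1. T (monom 1 n) \<noteq> 0 \<and> degree (T (monom 1 n)) = n - 1)"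

end

theory Submission
  imports Defs
begin

text \<open>Every monomial x^m is an eigenvector of Dx with eigenvalue m + 1. Hence
  \<Lambda> x^n = n f(n) x^(n-1), where f is the symbol \<open>\<Sum> a\<^sub>i x^i\<close>.
  So \<Lambda> vanishes iff f has infinitely many roots, i.e. f = 0, and \<Lambda> lowers
  degrees exactly iff f has no root at a positive integer.\<close>

definition symbol :: "nat \<Rightarrow> (nat \<Rightarrow> complex) \<Rightarrow> complex poly" where
  "symbol k a = (\<Sum>i\<le>k. monom (a i) i)"

lemma smult_sum_right: "smult c (\<Sum>i\<in>S. f i) = (\<Sum>i\<in>S. smult c (f i))"
  by (induction S rule: infinite_finite_induct) (simp_all add: smult_add_right)

lemma Dop_monom: "Dop (monom c n) = monom (of_nat n * c) (n - 1)"
  by (simp add: Dop_def pderiv_monom)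

lemma Xop_monom: "Xop (monom c m) = monom c (Suc m)"
  by (simp add: Xop_def monom_Suc)

lemma Dop_Xop_monom: "Dop (Xop (monom c m)) = monom (c * of_nat (Suc m)) m"
  by (simp add: Xop_monom Dop_monom mult.commute)

lemma funpow_Dop_Xop_monom:
  "((Dop \<circ> Xop) ^^ i) (monom c m) = monom (c * of_nat (Suc m) ^ i) m"
  by (induction i) (simp_all add: Dop_Xop_monom mult_ac)

lemma funpow_Dop_Xop_add:
  "((Dop \<circ> Xop) ^^ i) (p + q) = ((Dop \<circ> Xop) ^^ i) p + ((Dop \<circ> Xop) ^^ i) q"
proof -
  have "Dop (Xop (p + q)) = Dop (Xop p) + Dop (Xop q)" for p q
    by (simp add: Xop_def Dop_def distrib_left pderiv_add del: mult_pCons_left)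
  then show ?thesis by (induction i) simp_all
qed

lemma funpow_Dop_Xop_smult:
  "((Dop \<circ> Xop) ^^ i) (smult c p) = smult c (((Dop \<circ> Xop) ^^ i) p)"
proof -
  have "Dop (Xop (smult c p)) = smult c (Dop (Xop p))" for p
    by (simp add: Xop_def Dop_def pderiv_smult del: mult_pCons_left)
  then show ?thesis by (induction i) simp_all
qed

lemma Lam_add: "Lam k a (p + q) = Lam k a p + Lam k a q"
  by (simp add: Lam_def Dop_def pderiv_add funpow_Dop_Xop_add sum.distrib smult_add_right)

lemma Lam_smult: "Lam k a (smult c p) = smult c (Lam k a p)"
  by (simp add: Lam_def Dop_def pderiv_smult funpow_Dop_Xop_smult smult_sum_right mult.commute)

lemma Lam_one: "Lam k a 1 = 0"
  using funpow_Dop_Xop_smult[of _ 0 0] by (simp add: Lam_def Dop_def)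

lemma Lam_monom:
  "Lam k a (monom 1 n) = monom (of_nat n * poly (symbol k a) (of_nat n)) (n - 1)"
proof (cases n)
  case 0
  then show ?thesis
    using funpow_Dop_Xop_smult[of _ 0 0] by (simp add: Lam_def Dop_def)
next
  case (Suc m)
  have "Lam k a (monom 1 n) = (\<Sum>i\<le>k. monom (a i * (of_nat n * of_nat n ^ i)) m)"
    by (simp add: Lam_def Dop_monom funpow_Dop_Xop_monom smult_monom Suc)
  also have "\<dots> = monom (of_nat n * poly (symbol k a) (of_nat n)) m"
    by (simp add: monom_sum symbol_def poly_sum poly_monom sum_distrib_left algebra_simps)
  finally show ?thesis using Suc by simp
qed

lemma poly_eq_0_if_roots_at_positive_nats:
  fixes p :: "'a::{idom, ring_char_0} poly"
  assumes "\<And>n. 0 < n \<Longrightarrow> poly p (of_nat n) = 0"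
  shows "p = 0"
proof (rule ccontr)
  assume "p \<noteq> 0"
  then have "finite {x. poly p x = 0}" by (rule poly_roots_finite)
  moreover have "of_nat ` {1..} \<subseteq> {x. poly p x = 0}" using assms by auto
  ultimately have "finite (of_nat ` {1..} :: 'a set)" by (rule finite_subset[rotated])
  then have "finite {1::nat..}"
    by (rule finite_imageD) (simp add: inj_on_def)
  then show False using infinite_Ici by blast
qed

lemma symbol_eq_0_iff: "symbol k a = 0 \<longleftrightarrow> (\<forall>i\<le>k. a i = 0)"
proof
  assume "symbol k a = 0"
  then show "\<forall>i\<le>k. a i = 0"
    by (metis coeff_0 coeff_sum_monom symbol_def)
qed (simp add: symbol_def)

lemma Lam_eq_0_iff: "Lam k a = (\<lambda>p. 0) \<longleftrightarrow> symbol k a = 0"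
proof
  assume "Lam k a = (\<lambda>p. 0)"
  then have "poly (symbol k a) (of_nat n) = 0" if "0 < n" for n
    using Lam_monom[of k a n] that by simp
  then show "symbol k a = 0" by (rule poly_eq_0_if_roots_at_positive_nats)
qed (auto simp: Lam_def symbol_eq_0_iff)

lemma lowering_op_Lam_iff:
  "lowering_op (Lam k a) \<longleftrightarrow> (\<forall>n. 0 < n \<longrightarrow> poly (symbol k a) (of_nat n) \<noteq> 0)"
proof -
  have "Lam k a (monom 1 n) \<noteq> 0 \<and> degree (Lam k a (monom 1 n)) = n - 1
          \<longleftrightarrow> poly (symbol k a) (of_nat n) \<noteq> 0" if "1 \<le> n" for n
    using that
    by (cases "poly (symbol k a) (of_nat n) = 0") (simp_all add: Lam_monom degree_monom_eq)
  then show ?thesis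
    by (simp add: lowering_op_def Lam_add Lam_smult Lam_one Suc_le_eq)
qed

theorem proposition2:
  fixes k :: nat and a :: "nat \<Rightarrow> complex"
  shows "(0 < k \<longrightarrow> (Lam k a = (\<lambda>p. 0) \<longleftrightarrow> (\<forall>i\<le>k. a i = 0)))
       \<and> (a k \<noteq> 0 \<longrightarrow>
            (lowering_op (Lam k a) \<longleftrightarrow>
             \<not> (\<exists>n::nat. 0 < n \<and> poly (\<Sum>i\<le>k. monom (a i) i) (of_nat n) = 0)))"
  unfolding symbol_def[symmetric] Lam_eq_0_iff symbol_eq_0_iff lowering_op_Lam_iff
  by blast

end
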